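(* Let $\sigma:\mathbb R\to\mathbb R$ be a differentiable activation and let $f_{\theta_{\mathrm{wide}}}$ be a fully-connected network model with $M_{\mathrm{wide}}$ parameters. Then every function $f^*$ in the function space of any narrower fully-connected network satisfies $O_{f_{\theta_{\mathrm{wide}}}}(f^* )<M_{\mathrm{wide}}$; that is, $f^*$ has $n$-sample LLR-guarantee for the model $f_{\theta_{\mathrm{wide}}}$ for some $n<M_{\mathrm{wide}}$.
   Context: A fully-connected network $\mathrm{NN}(\{m_l\}_{l=0}^L)$, $L\geq2$, with $m_0=d$ and $m_L=1$ has parameters $\theta=(W^{[1]},b^{[1]},\dots,W^{[L]},b^{[L]})$ with $W^{[l]}\in\mathbb R^{m_l\times m_{l-1}}$, $b^{[l]}\in\mathbb R^{m_l}$ (a vector in $\mathbb R^M$, $M=\sum_{l=0}^{L-1}(m_l+1)m_{l+1}$), and output $f_\theta(x)=W^{[L]}f^{[L-1]}(x)+b^{[L]}$, where $f^{[0]}(x)=x$ and $f^{[l]}(x)=\sigma(W^{[l]}f^{[l-1]}(x)+b^{[l]})$ for $l\in[L-1]$. A network $\mathrm{NN}(\{m_l\})$ is narrower than $\mathrm{NN}'(\{m'_l\})$ (same $L$) if $m'_0=m_0$, $m'_L=m_L$, $m'_l\geq m_l$ for all $l\in[L-1]$, and $\sum_{l=1}^{L-1}(m'_l-m_l)>0$. The loss $\ell:\mathbb R\times\mathbb R\to[0,\infty)$ is continuously differentiable with $\ell(u,v)=0$ iff $u=v$. For a model $h_\theta$, $\theta\in\mathbb R^M$, and $f^*$ in its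 function space: $\mathcal M_{f^*}=\{\theta:h_\theta=f^*\}$; a dataset of size $n$ from $f^*$ is $\{(x_i,f^*(x_i))\}_{i=1}^n$ with empirical loss $\frac1n\sum_i\ell(u(x_i),f^*(x_i))$ (identically $0$ if $n=0$); the tangent hyperplane at $\theta'$ is $\{h(\cdot;\theta')+a^\top\nabla_\theta h(\cdot;\theta'):a\in\mathbb R^M\}$; $f^*$ has $n$-sample LLR-guarantee if for some dataset of size $n$ from $f^*$ and some $\theta'\in\mathcal M_{f^*}$ the set of minimizers of the empirical loss over the tangent hyperplane at $\theta'$ is exactly $\{f^*\}$; $O_h(f^* )$ is the smallest such $n\geq0$. *)

theory Defs
  imports "HOL-Analysis.Analysis"
begin

text \<open>An architecture is a list of widths [m_0, ..., m_L]; L = length ms - 1.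
 Parameter vectors in R^M are functions nat => real whose coordinates k >= M vanish.
 Inputs in R^d are functions nat => real of which only coordinates j < d are read.\<close>

definition depth :: "nat list \<Rightarrow> nat" where
  "depth ms = length ms - 1"

definition valid_arch :: "nat list \<Rightarrow> bool" where
  "valid_arch ms \<longleftrightarrow> depth ms \<ge> 2 \<and> ms ! depth ms = 1 \<and> (\<forall>l \<le> depth ms. ms ! l \<ge> 1)"

text \<open>Offset of the parameters (W^[l+1], b^[l+1]) in the flattened parameter vector.\<close>
definition poff :: "nat list \<Rightarrow> nat \<Rightarrow> nat" where
  "poff ms l = (\<Sum>k<l. (ms ! k + 1) * ms ! Suc k)"

definition nparams :: "nat list \<Rightarrow> nat" where
  "nparams ms = poff ms (depth ms)"

definition Wt :: "nat list \<Rightarrow> (nat \<Rightarrow> real) \<Rightarrow> nat \<Rightarrow> nat \<Rightarrow> nat \<Rightarrow> real" where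
  "Wt ms \<theta> l i j = \<theta> (poff ms l + i * ms ! l + j)"

definition Bs :: "nat list \<Rightarrow> (nat \<Rightarrow> real) \<Rightarrow> nat \<Rightarrow> nat \<Rightarrow> real" where
  "Bs ms \<theta> l i = \<theta> (poff ms l + ms ! Suc l * ms ! l + i)"

definition preact :: "nat list \<Rightarrow> (nat \<Rightarrow> real) \<Rightarrow> nat \<Rightarrow> (nat \<Rightarrow> real) \<Rightarrow> nat \<Rightarrow> real" where
  "preact ms \<theta> l h i = (\<Sum>j<ms ! l. Wt ms \<theta> l i j * h j) + Bs ms \<theta> l i"

primrec hidden :: "(real \<Rightarrow> real) \<Rightarrow> nat list \<Rightarrow> (nat \<Rightarrow> real) \<Rightarrow> (nat \<Rightarrow> real) \<Rightarrow> nat \<Rightarrow> nat \<Rightarrow> real" where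
  "hidden \<sigma> ms \<theta> x 0 = x"
| "hidden \<sigma> ms \<theta> x (Suc l) = (\<lambda>i. \<sigma> (preact ms \<theta> l (hidden \<sigma> ms \<theta> x l) i))"

definition nn_out :: "(real \<Rightarrow> real) \<Rightarrow> nat list \<Rightarrow> (nat \<Rightarrow> real) \<Rightarrow> (nat \<Rightarrow> real) \<Rightarrow> real" where
  "nn_out \<sigma> ms \<theta> x = preact ms \<theta> (depth ms - 1) (hidden \<sigma> ms \<theta> x (depth ms - 1)) 0"

definition narrower :: "nat list \<Rightarrow> nat list \<Rightarrow> bool" where
  "narrower ms ms' \<longleftrightarrow> length ms' = length ms \<and> ms' ! 0 = ms ! 0
     \<and> ms' ! depth ms = ms ! depth ms
     \<and> (\<forall>l\<in>{1..depth ms - 1}. ms' ! l \<ge> ms ! l)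
     \<and> (\<Sum>l=1..depth ms - 1. ms' ! l - ms ! l) > 0"

definition params :: "nat \<Rightarrow> (nat \<Rightarrow> real) set" where
  "params M = {\<theta>. \<forall>k\<ge>M. \<theta> k = 0}"

definition target_set :: "((nat \<Rightarrow> real) \<Rightarrow> 'x \<Rightarrow> real) \<Rightarrow> nat \<Rightarrow> ('x \<Rightarrow> real) \<Rightarrow> (nat \<Rightarrow> real) set" where
  "target_set h M f = {\<theta> \<in> params M. h \<theta> = f}"

definition pderiv_param :: "((nat \<Rightarrow> real) \<Rightarrow> 'x \<Rightarrow> real) \<Rightarrow> (nat \<Rightarrow> real) \<Rightarrow> nat \<Rightarrow> 'x \<Rightarrow> real" where
  "pderiv_param h \<theta> k x = deriv (\<lambda>t. h (\<theta>(k := t)) x) (\<theta> k)"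

definition tangent :: "((nat \<Rightarrow> real) \<Rightarrow> 'x \<Rightarrow> real) \<Rightarrow> nat \<Rightarrow> (nat \<Rightarrow> real) \<Rightarrow> ('x \<Rightarrow> real) set" where
  "tangent h M \<theta> = {(\<lambda>x. h \<theta> x + (\<Sum>k<M. a k * pderiv_param h \<theta> k x)) | a. True}"

definition emp_loss :: "(real \<Rightarrow> real \<Rightarrow> real) \<Rightarrow> nat \<Rightarrow> (nat \<Rightarrow> 'x) \<Rightarrow> ('x \<Rightarrow> real) \<Rightarrow> ('x \<Rightarrow> real) \<Rightarrow> real" where
  "emp_loss lossf n xs f u = (if n = 0 then 0 else (1 / real n) * (\<Sum>i<n. lossf (u (xs i)) (f (xs i))))"

definition has_LLR :: "(real \<Rightarrow> real \<Rightarrow> real) \<Rightarrow> ((nat \<Rightarrow> real) \<Rightarrow> 'x \<Rightarrow> real) \<Rightarrow> nat \<Rightarrow> ('x \<Rightarrow> real) \<Rightarrow> nat \<Rightarrow> bool" where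
  "has_LLR lossf h M f n \<longleftrightarrow> (\<exists>xs. \<exists>\<theta>'\<in>target_set h M f.
      {u \<in> tangent h M \<theta>'. \<forall>v\<in>tangent h M \<theta>'. emp_loss lossf n xs f u \<le> emp_loss lossf n xs f v} = {f})"

definition O_LLR :: "(real \<Rightarrow> real \<Rightarrow> real) \<Rightarrow> ((nat \<Rightarrow> real) \<Rightarrow> 'x \<Rightarrow> real) \<Rightarrow> nat \<Rightarrow> ('x \<Rightarrow> real) \<Rightarrow> nat" where
  "O_LLR lossf h M f = (LEAST n. has_LLR lossf h M f n)"

definition admissible_loss :: "(real \<Rightarrow> real \<Rightarrow> real) \<Rightarrow> bool" where
  "admissible_loss lossf \<longleftrightarrow> (\<forall>u v. lossf u v \<ge> 0) \<and> (\<forall>u v. lossf u v = 0 \<longleftrightarrow> u = v)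
     \<and> (\<exists>g1 g2. continuous_on UNIV g1 \<and> continuous_on UNIV g2 \<and>
          (\<forall>p. ((\<lambda>q. lossf (fst q) (snd q)) has_derivative (\<lambda>h. g1 p * fst h + g2 p * snd h)) (at p)))"

end

theory Submission
  imports Defs
begin

text \<open>Zero padding embeds the narrow network into the wide one: the extra neurons of a wider
  hidden layer get zero outgoing weights, so their incoming weights do not influence the output.
  Along one such weight the wide network is constant at the embedded parameter, hence its partial
  derivative vanishes and the tangent hyperplane is spanned by at most \<open>M - 1\<close> functions.
  Linear combinations of \<open>M - 1\<close> functions are determined by their values at \<open>M - 1\<close> suitable
  points, and with these points as samples the empirical loss, which is zero exactly when the
  samples are interpolated, has \<open>f\<^sup>*\<close> as its unique minimiser on the tangent hyperplane.\<close>

lemma poff_Suc: "poff ms (Suc l) = poff ms l + (ms ! l + 1) * ms ! Suc l"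
  by (simp add: poff_def)

lemma poff_mono: "l \<le> l' \<Longrightarrow> poff ms l \<le> poff ms l'"
  unfolding poff_def by (rule sum_mono2) auto

lemma poff_block_inj:
  assumes "a < (ms ! l + 1) * ms ! Suc l" and "a' < (ms ! l' + 1) * ms ! Suc l'"
    and "poff ms l + a = poff ms l' + a'"
  shows "l = l' \<and> a = a'"
proof -
  have "\<not> l < l'" and "\<not> l' < l"
    using assms poff_mono[of "Suc l" l' ms] poff_mono[of "Suc l'" l ms] poff_Suc[of ms]
    by (metis Suc_leI add_less_cancel_left not_add_less1 order_less_le_trans)+
  then show ?thesis using assms(3) by simp
qed

text \<open>The slot \<open>Inl (l, i, j)\<close> is the weight entry \<open>(W^[l+1])_ij\<close> and \<open>Inr (l, i)\<close> the bias
  entry \<open>(b^[l+1])_i\<close>.\<close>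

type_synonym param_slot = "(nat \<times> nat \<times> nat) + (nat \<times> nat)"

definition param_index :: "nat list \<Rightarrow> param_slot \<Rightarrow> nat" where
  "param_index ms s = (case s of
      Inl (l, i, j) \<Rightarrow> poff ms l + i * ms ! l + j
    | Inr (l, i) \<Rightarrow> poff ms l + ms ! Suc l * ms ! l + i)"

definition param_slots :: "nat list \<Rightarrow> param_slot set" where
  "param_slots ms =
     {Inl (l, i, j) | l i j. l < depth ms \<and> i < ms ! Suc l \<and> j < ms ! l}
   \<union> {Inr (l, i) | l i. l < depth ms \<and> i < ms ! Suc l}"

lemma Wt_param_index: "Wt ms \<theta> l i j = \<theta> (param_index ms (Inl (l, i, j)))"
  by (simp add: Wt_def param_index_def)

lemma Bs_param_index: "Bs ms \<theta> l i = \<theta> (param_index ms (Inr (l, i)))"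
  by (simp add: Bs_def param_index_def)

lemma mult_add_less_mult:
  fixes i j :: nat
  assumes "i < m" "j < n"
  shows "i * n + j < m * n"
proof -
  have "i * n + j < Suc i * n" using assms by simp
  also have "\<dots> \<le> m * n" using assms by (intro mult_le_mono1) simp
  finally show ?thesis .
qed

lemma weight_offset_lt_block:
  fixes i j :: nat
  shows "i < ms ! Suc l \<Longrightarrow> j < ms ! l \<Longrightarrow> i * ms ! l + j < (ms ! l + 1) * ms ! Suc l"
  using mult_add_less_mult[of i "ms ! Suc l" j "ms ! l"] by (simp add: algebra_simps)

lemma bias_offset_lt_block:
  fixes i :: nat
  shows "i < ms ! Suc l \<Longrightarrow> ms ! Suc l * ms ! l + i < (ms ! l + 1) * ms ! Suc l"
  by (simp add: algebra_simps)

lemma inj_on_param_index: "inj_on (param_index ms) (param_slots ms)"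
proof (rule inj_onI)
  fix s s' assume s: "s \<in> param_slots ms" and s': "s' \<in> param_slots ms"
    and eq: "param_index ms s = param_index ms s'"
  from s s' show "s = s'" unfolding param_slots_def
  proof (elim UnE CollectE exE conjE)
    fix l i j l' i' j'
    assume *: "s = Inl (l, i, j)" "s' = Inl (l', i', j')" "i < ms ! Suc l" "j < ms ! l"
      "i' < ms ! Suc l'" "j' < ms ! l'"
    have "l = l' \<and> i * ms ! l + j = i' * ms ! l' + j'"
      by (rule poff_block_inj[OF weight_offset_lt_block weight_offset_lt_block])
        (use * eq in \<open>simp_all add: param_index_def add.assoc\<close>)
    moreover have "(i * ms ! l + j) div ms ! l = i" "(i * ms ! l + j) mod ms ! l = j"
      "(i' * ms ! l + j') div ms ! l = i'" "(i' * ms ! l + j') mod ms ! l = j'" if "l = l'"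
      using * that by auto
    ultimately show "s = s'" using * by metis
  next
    fix l i j l' i'
    assume *: "s = Inl (l, i, j)" "s' = Inr (l', i')" "i < ms ! Suc l" "j < ms ! l" "i' < ms ! Suc l'"
    have "l = l' \<and> i * ms ! l + j = ms ! Suc l' * ms ! l' + i'"
      by (rule poff_block_inj[OF weight_offset_lt_block bias_offset_lt_block])
        (use * eq in \<open>simp_all add: param_index_def add.assoc\<close>)
    with * mult_add_less_mult[of i "ms ! Suc l" j "ms ! l"] show "s = s'" by auto
  next
    fix l i l' i' j'
    assume *: "s = Inr (l, i)" "s' = Inl (l', i', j')" "i < ms ! Suc l" "i' < ms ! Suc l'" "j' < ms ! l'"
    have "l = l' \<and> ms ! Suc l * ms ! l + i = i' * ms ! l' + j'"
      by (rule poff_block_inj[OF bias_offset_lt_block weight_offset_lt_block])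
        (use * eq in \<open>simp_all add: param_index_def add.assoc\<close>)
    with * mult_add_less_mult[of i' "ms ! Suc l'" j' "ms ! l'"] show "s = s'" by auto
  next
    fix l i l' i'
    assume *: "s = Inr (l, i)" "s' = Inr (l', i')" "i < ms ! Suc l" "i' < ms ! Suc l'"
    have "l = l' \<and> ms ! Suc l * ms ! l + i = ms ! Suc l' * ms ! l' + i'"
      by (rule poff_block_inj[OF bias_offset_lt_block bias_offset_lt_block])
        (use * eq in \<open>simp_all add: param_index_def add.assoc\<close>)
    with * show "s = s'" by auto
  qed
qed

lemma param_index_lt_nparams:
  assumes "s \<in> param_slots ms"
  shows "param_index ms s < nparams ms"
proof -
  obtain l where "l < depth ms" and "param_index ms s < poff ms (Suc l)"
    using assms weight_offset_lt_block bias_offset_lt_block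
    unfolding param_slots_def by (fastforce simp: param_index_def poff_Suc add.assoc)
  moreover from \<open>l < depth ms\<close> have "poff ms (Suc l) \<le> nparams ms"
    by (simp add: nparams_def poff_mono)
  ultimately show ?thesis by simp
qed

lemma params_from_slot_values:
  obtains \<theta> where "\<theta> \<in> params (nparams ms)"
    and "\<And>s. s \<in> param_slots ms \<Longrightarrow> \<theta> (param_index ms s) = v s"
proof
  let ?I = "param_index ms ` param_slots ms"
  define \<theta> where
    "\<theta> k = (if k \<in> ?I then v (the_inv_into (param_slots ms) (param_index ms) k) else 0)" for k
  show "\<theta> \<in> params (nparams ms)"
    using param_index_lt_nparams by (fastforce simp: params_def \<theta>_def)
  show "\<theta> (param_index ms s) = v s" if "s \<in> param_slots ms" for s
    using that by (simp add: \<theta>_def the_inv_into_f_f inj_on_param_index)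
qed

text \<open>Only the rows of the narrow network are constrained: the incoming weights and biases of
  the added neurons are free, because all their outgoing weights are zero.\<close>

definition zero_padded :: "nat list \<Rightarrow> nat list \<Rightarrow> (nat \<Rightarrow> real) \<Rightarrow> (nat \<Rightarrow> real) \<Rightarrow> bool" where
  "zero_padded ms ms' \<theta> \<theta>' \<longleftrightarrow> (\<forall>l < depth ms. \<forall>i < ms ! Suc l.
      (\<forall>j < ms' ! l. Wt ms' \<theta>' l i j = (if j < ms ! l then Wt ms \<theta> l i j else 0))
    \<and> Bs ms' \<theta>' l i = Bs ms \<theta> l i)"

lemma preact_zero_padded:
  assumes "zero_padded ms ms' \<theta> \<theta>'" and "l < depth ms" and "i < ms ! Suc l"
    and "ms ! l \<le> ms' ! l" and "\<And>j. j < ms ! l \<Longrightarrow> h' j = h j"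
  shows "preact ms' \<theta>' l h' i = preact ms \<theta> l h i"
proof -
  have "(\<Sum>j<ms' ! l. Wt ms' \<theta>' l i j * h' j) = (\<Sum>j<ms ! l. Wt ms \<theta> l i j * h j)"
    by (rule sum.mono_neutral_cong_right) (use assms in \<open>auto simp: zero_padded_def\<close>)
  then show ?thesis using assms by (simp add: preact_def zero_padded_def)
qed

lemma hidden_zero_padded:
  assumes "zero_padded ms ms' \<theta> \<theta>'" and "\<And>l. l \<le> depth ms \<Longrightarrow> ms ! l \<le> ms' ! l"
  shows "l < depth ms \<Longrightarrow> i < ms ! l \<Longrightarrow> hidden \<sigma> ms' \<theta>' x l i = hidden \<sigma> ms \<theta> x l i"
proof (induction l arbitrary: i)
  case (Suc l)
  then show ?case using assms by (simp add: preact_zero_padded)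
qed simp

lemma nn_out_zero_padded:
  assumes "zero_padded ms ms' \<theta> \<theta>'" and "\<And>l. l \<le> depth ms \<Longrightarrow> ms ! l \<le> ms' ! l"
    and "length ms' = length ms" and "valid_arch ms"
  shows "nn_out \<sigma> ms' \<theta>' = nn_out \<sigma> ms \<theta>"
proof
  fix x
  let ?L = "depth ms - 1"
  have "?L < depth ms" "0 < ms ! Suc ?L" using assms(4) by (auto simp: valid_arch_def)
  then have "preact ms' \<theta>' ?L (hidden \<sigma> ms' \<theta>' x ?L) 0 = preact ms \<theta> ?L (hidden \<sigma> ms \<theta> x ?L) 0"
    using assms(1,2) hidden_zero_padded[OF assms(1,2)] by (intro preact_zero_padded) auto
  moreover have "depth ms' = depth ms" using assms(3) by (simp add: depth_def)
  ultimately show "nn_out \<sigma> ms' \<theta>' x = nn_out \<sigma> ms \<theta> x" by (simp add: nn_out_def)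
qed

lemma narrower_widths_le: "narrower ms ms' \<Longrightarrow> l \<le> depth ms \<Longrightarrow> ms ! l \<le> ms' ! l"
  unfolding narrower_def by (cases "l = 0 \<or> l = depth ms") auto

lemma narrower_obtains_wider_layer:
  assumes "narrower ms ms'"
  obtains l where "l \<in> {1..depth ms - 1}" and "ms ! l < ms' ! l"
proof -
  have "0 < (\<Sum>l = 1..depth ms - 1. ms' ! l - ms ! l)" using assms unfolding narrower_def by blast
  then obtain l where "l \<in> {1..depth ms - 1}" "ms' ! l - ms ! l \<noteq> 0"
    by (metis (no_types, lifting) less_irrefl sum.neutral)
  with that show thesis by simp
qed

text \<open>The free parameter is the weight from neuron 0 of layer \<open>l - 1\<close> into the last neuron
  of a hidden layer \<open>l\<close> in which the wide network has an extra neuron.\<close>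

lemma zero_padding_with_free_parameter:
  assumes arch: "valid_arch ms" and nw: "narrower ms ms'"
  obtains \<theta>' k0 where "\<theta>' \<in> params (nparams ms')" and "k0 < nparams ms'"
    and "\<And>t. zero_padded ms ms' \<theta> (\<theta>'(k0 := t))"
proof -
  have depth_eq: "depth ms' = depth ms" using nw by (simp add: narrower_def depth_def)
  have le: "ms ! l \<le> ms' ! l" if "l \<le> depth ms" for l using nw that by (rule narrower_widths_le)
  obtain l0 where l0: "l0 \<in> {1..depth ms - 1}" "ms ! l0 < ms' ! l0"
    using nw by (rule narrower_obtains_wider_layer)
  define v where "v = case_sum (\<lambda>(l, i, j). if j < ms ! l then Wt ms \<theta> l i j else 0)
    (\<lambda>(l, i). Bs ms \<theta> l i)"
  obtain \<theta>' where \<theta>': "\<theta>' \<in> params (nparams ms')"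
    and slot_val: "\<And>s. s \<in> param_slots ms' \<Longrightarrow> \<theta>' (param_index ms' s) = v s"
    using params_from_slot_values by blast
  define s0 :: param_slot where "s0 = Inl (l0 - 1, ms' ! l0 - 1, 0)"
  have "0 < ms ! (l0 - 1)" using arch l0 unfolding valid_arch_def
    by (metis One_nat_def Suc_le_lessD atLeastAtMost_iff diff_le_self le_trans)
  moreover have "l0 - 1 \<le> depth ms" using l0 by auto
  ultimately have "0 < ms' ! (l0 - 1)" using le by (meson less_le_trans)
  with l0 have s0: "s0 \<in> param_slots ms'"
    by (auto simp: s0_def param_slots_def depth_eq)
  have slot_ne: "param_index ms' s \<noteq> param_index ms' s0"
    if "s \<in> param_slots ms'" "s \<noteq> s0" for s
    using inj_on_param_index that s0 by (metis inj_on_eq_iff)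
  show thesis
  proof
    show "\<theta>' \<in> params (nparams ms')" by (fact \<theta>')
    show "param_index ms' s0 < nparams ms'" using s0 by (rule param_index_lt_nparams)
    show "zero_padded ms ms' \<theta> (\<theta>'(param_index ms' s0 := t))" for t
      unfolding zero_padded_def
    proof (intro allI impI conjI)
      fix l i j assume "l < depth ms" "i < ms ! Suc l" "j < ms' ! l"
      moreover from this have "i < ms' ! Suc l" using le[of "Suc l"] by simp
      moreover have "Inl (l, i, j) \<noteq> s0" using l0 le[of l0] \<open>i < ms ! Suc l\<close>
        by (auto simp: s0_def)
      ultimately show "Wt ms' (\<theta>'(param_index ms' s0 := t)) l i j
          = (if j < ms ! l then Wt ms \<theta> l i j else 0)"
        by (simp add: Wt_param_index slot_val slot_ne param_slots_def depth_eq v_def)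
    next
      fix l i assume "l < depth ms" "i < ms ! Suc l"
      moreover from this have "i < ms' ! Suc l" using le[of "Suc l"] by simp
      moreover have "Inr (l, i) \<noteq> s0" by (simp add: s0_def)
      ultimately show "Bs ms' (\<theta>'(param_index ms' s0 := t)) l i = Bs ms \<theta> l i"
        by (simp add: Bs_param_index slot_val slot_ne param_slots_def depth_eq v_def)
    qed
  qed
qed

text \<open>Gaussian elimination on point evaluations: a point where some \<open>p k\<close> does not vanish
  eliminates \<open>p k\<close> from the others, and the remaining functions need one point fewer.\<close>

lemma determining_points_for_span:
  fixes p :: "nat \<Rightarrow> 'x \<Rightarrow> real"
  assumes "finite K"
  shows "\<exists>xs n. n \<le> card K \<and>
    (\<forall>a. (\<forall>i<n. (\<Sum>k\<in>K. a k * p k (xs i)) = 0) \<longrightarrow> (\<forall>x. (\<Sum>k\<in>K. a k * p k x) = 0))"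
  using assms
proof (induction K arbitrary: p rule: finite_induct)
  case empty
  then show ?case by simp
next
  case (insert k K)
  show ?case
  proof (cases "\<forall>x. p k x = 0")
    case True
    from insert.IH[of p] obtain xs n where "n \<le> card K"
      "\<forall>a. (\<forall>i<n. (\<Sum>j\<in>K. a j * p j (xs i)) = 0) \<longrightarrow> (\<forall>x. (\<Sum>j\<in>K. a j * p j x) = 0)"
      by blast
    with True insert.hyps show ?thesis by (intro exI[of _ xs] exI[of _ n]) auto
  next
    case False
    then obtain x0 where x0: "p k x0 \<noteq> 0" by blast
    define q where "q j y = p j y - p j x0 / p k x0 * p k y" for j y
    from insert.IH[of q] obtain xs n where n: "n \<le> card K" and
      det: "\<forall>a. (\<forall>i<n. (\<Sum>j\<in>K. a j * q j (xs i)) = 0) \<longrightarrow> (\<forall>x. (\<Sum>j\<in>K. a j * q j x) = 0)"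
      by blast
    have decompose: "(\<Sum>j\<in>insert k K. a j * p j y)
        = (\<Sum>j\<in>K. a j * q j y) + (\<Sum>j\<in>insert k K. a j * p j x0) / p k x0 * p k y" for a y
    proof -
      have "(\<Sum>j\<in>K. a j * q j y)
          = (\<Sum>j\<in>K. a j * p j y) - (\<Sum>j\<in>K. a j * p j x0) / p k x0 * p k y"
        by (simp add: q_def right_diff_distrib sum_subtractf sum_divide_distrib sum_distrib_right
            mult.assoc)
      moreover have "a k * p k x0 / p k x0 * p k y = a k * p k y" using x0 by simp
      ultimately show ?thesis using insert.hyps x0 by (simp add: add_divide_distrib algebra_simps)
    qed
    define ys where "ys i = (if i = 0 then x0 else xs (i - 1))" for i
    have "\<forall>x. (\<Sum>j\<in>insert k K. a j * p j x) = 0"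
      if vanish: "\<forall>i<Suc n. (\<Sum>j\<in>insert k K. a j * p j (ys i)) = 0" for a
    proof -
      from vanish have "(\<Sum>j\<in>insert k K. a j * p j x0) = 0" by (auto simp: ys_def)
      then have eliminated: "(\<Sum>j\<in>insert k K. a j * p j y) = (\<Sum>j\<in>K. a j * q j y)" for y
        using decompose[of a y] by simp
      have "\<forall>i<n. (\<Sum>j\<in>K. a j * q j (xs i)) = 0"
      proof (intro allI impI)
        fix i assume "i < n"
        with vanish have "(\<Sum>j\<in>insert k K. a j * p j (ys (Suc i))) = 0" by blast
        then show "(\<Sum>j\<in>K. a j * q j (xs i)) = 0" by (simp add: ys_def eliminated)
      qed
      with det show ?thesis by (simp add: eliminated)
    qed
    with n insert.hyps show ?thesis by (intro exI[of _ ys] exI[of _ "Suc n"]) auto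
  qed
qed

lemma emp_loss_nonneg:
  assumes "\<And>u v. 0 \<le> lossf u v"
  shows "0 \<le> emp_loss lossf n xs f u"
  by (simp add: emp_loss_def assms sum_nonneg)

lemma emp_loss_eq_0_iff:
  assumes "\<And>u v. 0 \<le> lossf u v" and "\<And>u v. lossf u v = 0 \<longleftrightarrow> u = v"
  shows "emp_loss lossf n xs f u = 0 \<longleftrightarrow> (\<forall>i<n. u (xs i) = f (xs i))"
  using assms by (auto simp: emp_loss_def sum_nonneg_eq_0_iff)

lemma has_LLR_if_samples_determine_tangent:
  assumes loss_nonneg: "\<And>u v. 0 \<le> lossf u v" and loss_zero: "\<And>u v. lossf u v = 0 \<longleftrightarrow> u = v"
    and "\<theta> \<in> params M" and "h \<theta> = f"
    and det: "\<And>a x. \<forall>i<n. (\<Sum>k<M. a k * pderiv_param h \<theta> k (xs i)) = 0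
      \<Longrightarrow> (\<Sum>k<M. a k * pderiv_param h \<theta> k x) = 0"
  shows "has_LLR lossf h M f n"
  unfolding has_LLR_def target_set_def
proof (intro exI bexI)
  show "\<theta> \<in> {\<theta> \<in> params M. h \<theta> = f}" using assms by simp
  let ?E = "emp_loss lossf n xs f"
  have tangent: "tangent h M \<theta> = {(\<lambda>x. f x + (\<Sum>k<M. a k * pderiv_param h \<theta> k x)) | a. True}"
    unfolding tangent_def using \<open>h \<theta> = f\<close> by simp
  have f_tangent: "f \<in> tangent h M \<theta>" unfolding tangent by (auto intro!: exI[of _ "\<lambda>_. 0"])
  have E_f: "?E f = 0" by (simp add: emp_loss_eq_0_iff[OF loss_nonneg loss_zero])
  have E_nonneg: "0 \<le> ?E v" for v by (rule emp_loss_nonneg[OF loss_nonneg])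
  show "{u \<in> tangent h M \<theta>. \<forall>v\<in>tangent h M \<theta>. ?E u \<le> ?E v} = {f}"
  proof (intro equalityI subsetI)
    fix u assume "u \<in> {u \<in> tangent h M \<theta>. \<forall>v\<in>tangent h M \<theta>. ?E u \<le> ?E v}"
    then have "u \<in> tangent h M \<theta>" and "?E u \<le> ?E f" using f_tangent by auto
    then obtain a where u: "u = (\<lambda>x. f x + (\<Sum>k<M. a k * pderiv_param h \<theta> k x))"
      unfolding tangent by blast
    from \<open>?E u \<le> ?E f\<close> E_f E_nonneg[of u] have "?E u = 0" by linarith
    then have "\<forall>i<n. (\<Sum>k<M. a k * pderiv_param h \<theta> k (xs i)) = 0"
      by (simp add: u emp_loss_eq_0_iff[OF loss_nonneg loss_zero])
    then have "\<forall>x. (\<Sum>k<M. a k * pderiv_param h \<theta> k x) = 0" using det by blast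
    then show "u \<in> {f}" by (simp add: u)
  next
    fix u assume "u \<in> {f}"
    then show "u \<in> {u \<in> tangent h M \<theta>. \<forall>v\<in>tangent h M \<theta>. ?E u \<le> ?E v}"
      using f_tangent E_f E_nonneg by simp
  qed
qed

lemma has_LLR_of_free_parameter:
  assumes loss_nonneg: "\<And>u v. 0 \<le> lossf u v" and loss_zero: "\<And>u v. lossf u v = 0 \<longleftrightarrow> u = v"
    and "\<theta> \<in> params M" and "k0 < M" and free: "\<And>t. h (\<theta>(k0 := t)) = f"
  shows "\<exists>n<M. has_LLR lossf h M f n"
proof -
  let ?p = "pderiv_param h \<theta>"
  have "h \<theta> = f" using free[of "\<theta> k0"] by simp
  have "?p k0 = (\<lambda>x. 0)" by (simp add: fun_eq_iff pderiv_param_def free)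
  then have sum_drop_k0: "(\<Sum>k<M. a k * ?p k x) = (\<Sum>k\<in>{..<M} - {k0}. a k * ?p k x)" for a x
    using \<open>k0 < M\<close> by (simp add: sum.remove)
  obtain xs n where "n \<le> card ({..<M} - {k0})" and
    det: "\<forall>a. (\<forall>i<n. (\<Sum>k\<in>{..<M} - {k0}. a k * ?p k (xs i)) = 0)
      \<longrightarrow> (\<forall>x. (\<Sum>k\<in>{..<M} - {k0}. a k * ?p k x) = 0)"
    using determining_points_for_span[of "{..<M} - {k0}" ?p] by blast
  moreover have "card ({..<M} - {k0}) < M" using \<open>k0 < M\<close> by simp
  moreover have "has_LLR lossf h M f n"
    using loss_nonneg loss_zero \<open>\<theta> \<in> params M\<close> \<open>h \<theta> = f\<close>
    by (rule has_LLR_if_samples_determine_tangent[where xs = xs])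
      (use det in \<open>simp add: sum_drop_k0\<close>)
  ultimately show ?thesis by (meson le_less_trans)
qed

theorem mainTheorem12:
  fixes \<sigma> :: "real \<Rightarrow> real" and lossf :: "real \<Rightarrow> real \<Rightarrow> real"
    and ms ms' :: "nat list" and f :: "(nat \<Rightarrow> real) \<Rightarrow> real"
  assumes "\<forall>t. \<sigma> differentiable (at t)"
    and "admissible_loss lossf"
    and "valid_arch ms" and "valid_arch ms'"
    and "narrower ms ms'"
    and "f \<in> range (nn_out \<sigma> ms)"
  shows "has_LLR lossf (nn_out \<sigma> ms') (nparams ms') f (O_LLR lossf (nn_out \<sigma> ms') (nparams ms') f)
     \<and> O_LLR lossf (nn_out \<sigma> ms') (nparams ms') f < nparams ms'"
proof -
  let ?h = "nn_out \<sigma> ms'" and ?M = "nparams ms'"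
  obtain \<theta> where f: "f = nn_out \<sigma> ms \<theta>" using assms(6) by auto
  obtain \<theta>' k0 where "\<theta>' \<in> params ?M" "k0 < ?M"
    and padded: "\<And>t. zero_padded ms ms' \<theta> (\<theta>'(k0 := t))"
    using zero_padding_with_free_parameter[OF assms(3,5)] by blast
  moreover have "?h (\<theta>'(k0 := t)) = f" for t
    using nn_out_zero_padded[OF padded narrower_widths_le[OF assms(5)]] assms(3,5)
    by (simp add: f narrower_def)
  moreover have "0 \<le> lossf u v" and "lossf u v = 0 \<longleftrightarrow> u = v" for u v
    using assms(2) by (auto simp: admissible_loss_def)
  ultimately obtain n where "n < ?M" and LLR: "has_LLR lossf ?h ?M f n"
    using has_LLR_of_free_parameter by metis
  have "has_LLR lossf ?h ?M f (O_LLR lossf ?h ?M f)"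
    unfolding O_LLR_def using LLR by (rule LeastI)
  moreover have "O_LLR lossf ?h ?M f \<le> n"
    unfolding O_LLR_def using LLR by (rule Least_le)
  ultimately show ?thesis using \<open>n < ?M\<close> by simp
qed

end
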